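(* Let $a,b\in\mathbb{Q}_3$ with $\gamma(a)=\gamma(b)=-m<0$ ($m>0$). Then $x=\sum_{k\ge0}x_k3^k\in\mathbb{Z}_3^*$ is a solution of $x^3+ax=b$ if and only if the congruences $$a_0x_0\equiv b_0\pmod 3,$$ $$x_ka_0+x_{k-1}a_1+\dots+x_0a_k+M_k(x_0,\dots,x_{k-1})\equiv b_k\pmod3,\quad 1\le k\le m-1,$$ $$x_ma_0+x_{m-1}a_1+\dots+x_0a_m+x_0^3+M_m(x_0,\dots,x_{m-1})\equiv b_m\pmod3,$$ $$x_{m+1}a_0+x_ma_1+\dots+x_0a_{m+1}+M_{m+1}(x_0,\dots,x_m)\equiv b_{m+1}\pmod3,$$ $$x_ka_0+x_{k-1}a_1+\dots+x_0a_k+x_0^2x_{k-m-1}+N_{k-m}(x_0,\dots,x_{k-m-1})+M_k(x_0,\dots,x_{k-1})\equiv b_k\pmod3,\quad k\ge m+2,$$ are fulfilled, where the integers $M_k(x_0,\dots,x_{k-1})$ are defined successively by $$a_0x_0=b_0+3M_1(x_0),$$ $$x_ka_0+\dots+x_0a_k=b_k-M_k(x_0,\dots,x_{k-1})+3M_{k+1}(x_0,\dots,x_k),\quad1\le k\le m-1,$$ $$x_ma_0+\dots+x_0a_m+x_0^3=b_m-M_m(x_0,\dots,x_{m-1})+3M_{m+1}(x_0,\dots,x_m),$$ $$x_{m+1}a_0+\dots+x_0a_{m+1}=b_{m+1}-M_{m+1}(x_0,\dots,x_m)+3M_{m+2}(x_0,\dots,x_{m+1}),$$ $$x_ka_0+\dots+x_0a_k+x_0^2x_{k-m-1}+N_{k-m}(x_0,\dots,x_{k-m-1})=b_k-M_k(x_0,\dots,x_{k-1})+3M_{k+1}(x_0,\dots,x_k),\quad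 k\ge m+2.$$
   Context: Write $a=3^{\gamma(a)}(a_0+a_13+a_23^2+\dots)$, $b=3^{\gamma(b)}(b_0+b_13+b_23^2+\dots)$ in canonical form, with digits $a_j,b_j\in\{0,1,2\}$, $a_0,b_0\ne0$, $\gamma(a),\gamma(b)\in\mathbb{Z}$. $\mathbb{Z}_3^*$ is the set of $3$-adic units; $x\in\mathbb{Z}_3^*$ is written $x=x_0+x_13+x_23^2+\dots$ with $x_j\in\{0,1,2\}$, $x_0\ne0$. For $k\ge1$, $N_k(x_0,\dots,x_{k-1})=\sum \frac{3!}{m_0!\cdots m_{k-1}!}x_0^{m_0}\cdots x_{k-1}^{m_{k-1}}$, the sum over nonnegative integers $m_0,\dots,m_{k-1}$ with $\sum_{i=0}^{k-1}m_i=3$ and $\sum_{i=1}^{k-1}im_i=k$; in particular $N_1=0$. *)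

theory Defs
  imports Main "HOL-Library.FuncSet" "HOL-Number_Theory.Cong"
begin

text \<open>A 3-adic digit sequence d represents the 3-adic integer sum_j d j * 3^j.
  Its truncation modulo 3^n is the partial sum below.\<close>
definition trunc3 :: "(nat \<Rightarrow> int) \<Rightarrow> nat \<Rightarrow> int" where
  "trunc3 d n = (\<Sum>j<n. d j * 3 ^ j)"

definition digits3 :: "(nat \<Rightarrow> int) \<Rightarrow> bool" where
  "digits3 d \<longleftrightarrow> (\<forall>j. d j \<in> {0, 1, 2})"

text \<open>Let a = 3^(-m) * (sum a_j 3^j), b = 3^(-m) * (sum b_j 3^j), x = sum x_j 3^j.
  Then x^3 + a x = b in Q_3 iff 3^m x^3 + A x = B in Z_3 (A, B the unit parts),
  and equality in Z_3 = inverse limit of Z/3^n Z means congruence of all truncations.\<close>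
definition cubic_sol3 :: "nat \<Rightarrow> (nat \<Rightarrow> int) \<Rightarrow> (nat \<Rightarrow> int) \<Rightarrow> (nat \<Rightarrow> int) \<Rightarrow> bool" where
  "cubic_sol3 m a b x \<longleftrightarrow>
     (\<forall>n. [3 ^ m * (trunc3 x n) ^ 3 + trunc3 a n * trunc3 x n = trunc3 b n] (mod 3 ^ n))"

definition Npoly :: "nat \<Rightarrow> (nat \<Rightarrow> int) \<Rightarrow> int" where
  "Npoly k x = (\<Sum>mm \<in> {mm \<in> {..<k} \<rightarrow>\<^sub>E {0..3::nat}.
        (\<Sum>i<k. mm i) = 3 \<and> (\<Sum>i\<in>{1..<k}. i * mm i) = k}.
      int (fact 3 div (\<Prod>i<k. fact (mm i))) * (\<Prod>i<k. x i ^ mm i))"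

definition conv3 :: "(nat \<Rightarrow> int) \<Rightarrow> (nat \<Rightarrow> int) \<Rightarrow> nat \<Rightarrow> int" where
  "conv3 a x k = (\<Sum>i\<le>k. x (k - i) * a i)"

definition Slhs :: "nat \<Rightarrow> (nat \<Rightarrow> int) \<Rightarrow> (nat \<Rightarrow> int) \<Rightarrow> nat \<Rightarrow> int" where
  "Slhs m a x k = conv3 a x k
     + (if k = m then x 0 ^ 3 else 0)
     + (if k \<ge> m + 2 then x 0 ^ 2 * x (k - m - 1) + Npoly (k - m) x else 0)"

fun Mcarry :: "nat \<Rightarrow> (nat \<Rightarrow> int) \<Rightarrow> (nat \<Rightarrow> int) \<Rightarrow> (nat \<Rightarrow> int) \<Rightarrow> nat \<Rightarrow> int" where
  "Mcarry m a b x 0 = 0"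
| "Mcarry m a b x (Suc k) = (Slhs m a x k - b k + Mcarry m a b x k) div 3"

end

(*
  Expand everything in base 3.  Modulo 3^n the left-hand side 3^m x^3 + A x only depends on
  the first n coefficients of the power series X^m x(X)^3 + a(X) x(X) in X = 3.  By the
  multinomial theorem the coefficient of X^k in x(X)^3 is x_0^3 for k = 0 and
  3 x_0^2 x_k + N_k(x_0,...,x_{k-1}) for k >= 1; the paper moves the summand 3 x_0^2 x_{k-m},
  which sits at position k of the shifted cube, to position k + 1 as x_0^2 x_{k-m}, which does not
  change the value of the truncated sum modulo 3^n.  The resulting digit-wise sums S_k satisfy
  sum_{k<n} (S_k - b_k) 3^k = 3^n M_n + sum_{k<n} r_k 3^k with genuine digits
  r_k = (S_k - b_k + M_k) mod 3, so all truncated equations hold iff every r_k vanishes.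
*)

theory Submission
  imports Defs "HOL-Computational_Algebra.Formal_Power_Series" "HOL-Combinatorics.Multiset_Permutations"
begin

unbundle fps_syntax

definition mset_of_counts :: "'a set \<Rightarrow> ('a \<Rightarrow> nat) \<Rightarrow> 'a multiset" where
  "mset_of_counts U c = (\<Sum>t\<in>U. replicate_mset (c t) t)"

lemma count_mset_of_counts:
  "finite U \<Longrightarrow> count (mset_of_counts U c) t = (if t \<in> U then c t else 0)"
  unfolding mset_of_counts_def by (simp add: count_sum sum.delta)

lemma set_mset_of_counts_subset: "finite U \<Longrightarrow> set_mset (mset_of_counts U c) \<subseteq> U"
  by (metis count_eq_zero_iff count_mset_of_counts subsetI)

lemma size_mset_of_counts: "size (mset_of_counts U c) = (\<Sum>t\<in>U. c t)"
  unfolding mset_of_counts_def by (simp add: size_multiset_sum)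

lemma sum_mset_of_counts: "finite U \<Longrightarrow> sum_mset (mset_of_counts U c) = (\<Sum>t\<in>U. c t * t)"
  unfolding mset_of_counts_def by (induction U rule: finite_induct) (auto simp: sum_mset_replicate_mset)

lemma prod_mset_image_mset_of_counts:
  "finite U \<Longrightarrow> prod_mset (image_mset x (mset_of_counts U c)) = (\<Prod>t\<in>U. x t ^ c t)"
  unfolding mset_of_counts_def by (induction U rule: finite_induct) auto

lemma sum_prod_list_by_mset:
  fixes x :: "'a \<Rightarrow> 'b::comm_semiring_1"
  assumes "finite T"
  shows "(\<Sum>xs | mset xs \<in> T. prod_list (map x xs)) =
    (\<Sum>M\<in>T. of_nat (card (permutations_of_multiset M)) * prod_mset (image_mset x M))"
proof -
  have "{xs. mset xs \<in> T} = (\<Union>M\<in>T. permutations_of_multiset M)"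
    by (auto simp: permutations_of_multiset_def)
  then have "(\<Sum>xs | mset xs \<in> T. prod_list (map x xs)) =
      (\<Sum>M\<in>T. \<Sum>xs\<in>permutations_of_multiset M. prod_list (map x xs))"
    using assms by (simp only:) (rule sum.UNION_disjoint; auto simp: permutations_of_multiset_def
        finite_permutations_of_multiset[unfolded permutations_of_multiset_def])
  also have "\<dots> = (\<Sum>M\<in>T. \<Sum>xs\<in>permutations_of_multiset M. prod_mset (image_mset x M))"
    by (intro sum.cong refl) (auto simp: permutations_of_multiset_def simp flip: prod_mset_prod_list)
  finally show ?thesis by simp
qed

lemma sum_lists_eq_multinomial_sum:
  fixes x :: "'a \<Rightarrow> 'b::comm_semiring_1"
  assumes U: "finite U"
  shows "(\<Sum>xs | set xs \<subseteq> U \<and> length xs = n \<and> P (mset xs). prod_list (map x xs)) =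
    (\<Sum>c \<in> {c \<in> U \<rightarrow>\<^sub>E {0..n}. (\<Sum>t\<in>U. c t) = n \<and> P (mset_of_counts U c)}.
       of_nat (fact n div (\<Prod>t\<in>U. fact (c t))) * (\<Prod>t\<in>U. x t ^ c t))"
proof -
  define T where "T = {M. set_mset M \<subseteq> U \<and> size M = n \<and> P M}"
  have "T \<subseteq> mset ` {xs. set xs \<subseteq> U \<and> length xs = n}"
  proof
    fix M assume "M \<in> T"
    obtain xs where xs: "mset xs = M"
      using ex_mset by blast
    with \<open>M \<in> T\<close> have "xs \<in> {xs. set xs \<subseteq> U \<and> length xs = n}"
      by (auto simp: T_def)
    with xs show "M \<in> mset ` {xs. set xs \<subseteq> U \<and> length xs = n}"
      by blast
  qed
  then have "finite T"
    by (rule finite_subset) (simp add: finite_lists_length_eq[OF U])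
  have "{xs. set xs \<subseteq> U \<and> length xs = n \<and> P (mset xs)} = {xs. mset xs \<in> T}"
    by (simp add: T_def)
  then have "(\<Sum>xs | set xs \<subseteq> U \<and> length xs = n \<and> P (mset xs). prod_list (map x xs)) =
      (\<Sum>M\<in>T. of_nat (card (permutations_of_multiset M)) * prod_mset (image_mset x M))"
    using sum_prod_list_by_mset[OF \<open>finite T\<close>] by simp
  also have "\<dots> = (\<Sum>c \<in> {c \<in> U \<rightarrow>\<^sub>E {0..n}. (\<Sum>t\<in>U. c t) = n \<and> P (mset_of_counts U c)}.
       of_nat (fact n div (\<Prod>t\<in>U. fact (c t))) * (\<Prod>t\<in>U. x t ^ c t))"
  proof (rule sym, rule sum.reindex_bij_witness[where i="\<lambda>M. restrict (count M) U" and j="mset_of_counts U"])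
    fix c assume c: "c \<in> {c \<in> U \<rightarrow>\<^sub>E {0..n}. (\<Sum>t\<in>U. c t) = n \<and> P (mset_of_counts U c)}"
    then show "restrict (count (mset_of_counts U c)) U = c"
      by (auto simp: count_mset_of_counts[OF U] PiE_def extensional_def)
    show "mset_of_counts U c \<in> T"
      using c by (simp add: T_def set_mset_of_counts_subset[OF U] size_mset_of_counts)
    have "(\<Prod>t\<in>U. fact (c t) :: nat) =
        (\<Prod>t\<in>set_mset (mset_of_counts U c). fact (count (mset_of_counts U c) t))"
      by (rule prod.mono_neutral_cong_right)
        (use U set_mset_of_counts_subset[OF U] in
          \<open>auto simp: count_mset_of_counts[OF U] simp flip: count_eq_zero_iff\<close>)
    then show "of_nat (card (permutations_of_multiset (mset_of_counts U c))) *
        prod_mset (image_mset x (mset_of_counts U c)) =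
        of_nat (fact n div (\<Prod>t\<in>U. fact (c t))) * (\<Prod>t\<in>U. x t ^ c t)"
      using c by (simp add: card_permutations_of_multiset(1) prod_mset_image_mset_of_counts[OF U]
          size_mset_of_counts)
  next
    fix M assume M: "M \<in> T"
    then have sub: "set_mset M \<subseteq> U" by (simp add: T_def)
    show M_eq: "mset_of_counts U (restrict (count M) U) = M"
      by (rule multiset_eqI) (auto simp: count_mset_of_counts[OF U] count_eq_zero_iff dest: subsetD[OF sub])
    have "size M = (\<Sum>t\<in>U. restrict (count M) U t)"
      by (subst M_eq[symmetric], simp only: size_mset_of_counts)
    moreover have "count M t \<le> n" for t
      using count_le_size[of M t] M by (simp add: T_def)
    ultimately show "restrict (count M) U \<in> {c \<in> U \<rightarrow>\<^sub>E {0..n}. (\<Sum>t\<in>U. c t) = n \<and> P (mset_of_counts U c)}"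
      using M M_eq by (auto simp: T_def)
  qed
  finally show ?thesis .
qed

lemma Npoly_eq_sum_lists:
  "Npoly k x = (\<Sum>xs | set xs \<subseteq> {..<k} \<and> length xs = 3 \<and> sum_list xs = k. prod_list (map x xs))"
proof -
  have weight: "(\<Sum>i\<in>{1..<k}. i * c i) = sum_mset (mset_of_counts {..<k} c)" for c :: "nat \<Rightarrow> nat"
    by (simp add: sum_mset_of_counts mult.commute) (rule sum.mono_neutral_left; auto)
  show ?thesis
    unfolding Npoly_def weight
    using sum_lists_eq_multinomial_sum[of "{..<k}" x 3 "\<lambda>M. sum_mset M = k"]
    by (simp add: sum_mset_sum_list)
qed

lemma fps_cube_nth:
  fixes f :: "int fps"
  assumes "k > 0"
  shows "(f ^ 3) $ k = 3 * (f $ 0) ^ 2 * f $ k + Npoly k (fps_nth f)"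
proof -
  let ?p = "\<lambda>v. prod_list (map (fps_nth f) v)"
  define A where "A = {v \<in> natpermute k 3. k \<in> set v}"
  define B where "B = {v \<in> natpermute k 3. k \<notin> set v}"
  have split: "natpermute k 3 = A \<union> B" "A \<inter> B = {}" "finite A" "finite B"
    using natpermute_finite[of k 3] by (auto simp: A_def B_def)
  have "(f ^ 3) $ k = (\<Sum>v\<in>natpermute k 3. ?p v)"
  proof -
    have "(\<Prod>j\<in>{0..2}. f $ (v ! j)) = ?p v" if "v \<in> natpermute k 3" for v
    proof -
      have "length v = 3"
        using that by (simp add: natpermute_def)
      then obtain i j l where "v = [i, j, l]"
        by (auto simp: numeral_3_eq_3 length_Suc_conv)
      then show ?thesis by (simp add: eval_nat_numeral atLeast0AtMost)
    qed
    then show ?thesis by (simp add: fps_power_nth)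
  qed
  also have "\<dots> = (\<Sum>v\<in>A. ?p v) + (\<Sum>v\<in>B. ?p v)"
    using split by (simp add: sum.union_disjoint)
  also have "(\<Sum>v\<in>A. ?p v) = 3 * (f $ 0) ^ 2 * f $ k"
  proof -
    have "{0..2::nat} = {0, 1, 2}"
      by auto
    then have A_eq: "A = {[k, 0, 0], [0, k, 0], [0, 0, k]}"
      using natpermute_contain_maximal[of k 2] by (simp add: A_def eval_nat_numeral insert_commute)
    have "?p v = (f $ 0) ^ 2 * f $ k" if "v \<in> A" for v
      using that by (auto simp: A_eq power2_eq_square)
    moreover have "card A = 3"
      using natpermute_max_card[of k 2] assms by (simp add: A_def)
    ultimately show ?thesis by simp
  qed
  also have "B = {xs. set xs \<subseteq> {..<k} \<and> length xs = 3 \<and> sum_list xs = k}"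
    by (auto simp: B_def natpermute_def order.strict_iff_order member_le_sum_list)
  finally show ?thesis by (simp add: Npoly_eq_sum_lists)
qed

lemma trunc3_0 [simp]: "trunc3 f 0 = 0"
  by (simp add: trunc3_def)

lemma trunc3_Suc [simp]: "trunc3 f (Suc n) = trunc3 f n + f n * 3 ^ n"
  by (simp add: trunc3_def)

lemma trunc3_add: "trunc3 (\<lambda>k. f k + g k) n = trunc3 f n + trunc3 g n"
  by (simp add: trunc3_def sum.distrib distrib_right)

lemma trunc3_cong_of_le:
  assumes "n \<le> N"
  shows "[trunc3 f N = trunc3 f n] (mod 3 ^ n)"
  using assms
proof (induction N rule: dec_induct)
  case (step N)
  have "[f N * 3 ^ N = 0] (mod 3 ^ n)"
    using step.hyps by (simp add: cong_0_iff le_imp_power_dvd)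
  from cong_add[OF step.IH this] show ?case
    by simp
qed simp

lemma trunc3_fps_mult_cong:
  fixes f g :: "int fps"
  shows "[trunc3 (fps_nth f) n * trunc3 (fps_nth g) n = trunc3 (fps_nth (f * g)) n] (mod 3 ^ n)"
proof -
  define t where "t = (\<lambda>(i, j). f $ i * g $ j * 3 ^ (i + j) :: int)"
  define D where "D = {(i, j). i + j < (n::nat)}"
  have "trunc3 (fps_nth f) n * trunc3 (fps_nth g) n = sum t ({..<n} \<times> {..<n})"
    by (simp add: t_def trunc3_def sum_product sum.cartesian_product power_add algebra_simps)
  also have "\<dots> = sum t ({..<n} \<times> {..<n} - D) + sum t D"
    by (rule sum.subset_diff) (auto simp: D_def)
  also have "[\<dots> = 0 + sum t D] (mod 3 ^ n)"
  proof (intro cong_add cong_refl)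
    show "[sum t ({..<n} \<times> {..<n} - D) = 0] (mod 3 ^ n)"
      unfolding cong_0_iff by (rule dvd_sum) (auto simp: t_def D_def le_imp_power_dvd)
  qed
  also have "sum t D = (\<Sum>k<n. \<Sum>i\<le>k. f $ i * g $ (k - i) * 3 ^ k)"
    unfolding t_def D_def sum.triangle_reindex by (intro sum.cong refl) simp
  also have "\<dots> = trunc3 (fps_nth (f * g)) n"
    by (simp add: trunc3_def fps_mult_nth atLeast0AtMost sum_distrib_right)
  finally show ?thesis
    by simp
qed

lemma trunc3_fps_power_cong:
  fixes f :: "int fps"
  shows "[trunc3 (fps_nth f) n ^ j = trunc3 (fps_nth (f ^ j)) n] (mod 3 ^ n)"
proof (induction j)
  case 0
  show ?case
  proof (cases n)
    case (Suc n')
    have "trunc3 (fps_nth 1) n = 1"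
      unfolding Suc by (induction n') simp_all
    then show ?thesis
      by (simp only: power_0 cong_refl)
  qed simp
next
  case (Suc j)
  have "[trunc3 (fps_nth f) n ^ Suc j = trunc3 (fps_nth f) n * trunc3 (fps_nth (f ^ j)) n] (mod 3 ^ n)"
    using Suc.IH by (simp add: cong_scalar_left)
  moreover have "[trunc3 (fps_nth f) n * trunc3 (fps_nth (f ^ j)) n = trunc3 (fps_nth (f ^ Suc j)) n] (mod 3 ^ n)"
    using trunc3_fps_mult_cong by simp
  ultimately show ?case
    by (rule cong_trans)
qed

lemma trunc3_fps_X_power_mult:
  fixes f :: "int fps"
  shows "trunc3 (fps_nth (fps_X ^ m * f)) (n + m) = 3 ^ m * trunc3 (fps_nth f) n"
proof (induction n)
  case 0
  show ?case
    by (simp add: trunc3_def fps_X_power_mult_nth)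
next
  case (Suc n)
  have "trunc3 (fps_nth (fps_X ^ m * f)) (Suc n + m) =
      trunc3 (fps_nth (fps_X ^ m * f)) (n + m) + (fps_X ^ m * f) $ (n + m) * 3 ^ (n + m)"
    by (simp only: add_Suc trunc3_Suc)
  also have "(fps_X ^ m * f) $ (n + m) = f $ n"
    by (subst fps_X_power_mult_nth) simp
  finally show ?case
    unfolding Suc.IH by (simp add: power_add algebra_simps)
qed

lemma trunc3_fps_X_power_mult_cong:
  fixes f :: "int fps"
  shows "[3 ^ m * trunc3 (fps_nth f) n = trunc3 (fps_nth (fps_X ^ m * f)) n] (mod 3 ^ n)"
  using trunc3_cong_of_le[of n "n + m" "fps_nth (fps_X ^ m * f)"]
  by (simp add: trunc3_fps_X_power_mult)

lemma trunc3_telescope: "trunc3 (\<lambda>k. 3 * g (Suc k) - g k) n = 3 ^ n * g n - g 0"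
  by (induction n) (simp_all add: algebra_simps)

lemma sum_mult_power_eq_carry_digits:
  fixes d c :: "nat \<Rightarrow> int"
  assumes "c 0 = 0" and "\<And>k. c (Suc k) = (d k + c k) div p"
  shows "(\<Sum>k<n. d k * p ^ k) = p ^ n * c n + (\<Sum>k<n. ((d k + c k) mod p) * p ^ k)"
proof (induction n)
  case (Suc n)
  have "d n + c n = p * c (Suc n) + (d n + c n) mod p"
    by (simp add: assms(2))
  then have "(d n + c n) * p ^ n = (p * c (Suc n) + (d n + c n) mod p) * p ^ n"
    by simp
  then show ?case
    using Suc.IH by (simp add: algebra_simps)
qed (simp add: assms(1))

lemma sum_digits_bounds:
  fixes r :: "nat \<Rightarrow> int"
  assumes "\<And>k. 0 \<le> r k \<and> r k < p"
  shows "0 \<le> (\<Sum>k<n. r k * p ^ k) \<and> (\<Sum>k<n. r k * p ^ k) < p ^ n"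
proof (induction n)
  case (Suc n)
  have "r n * p ^ n \<le> (p - 1) * p ^ n"
    using assms[of n] by (intro mult_right_mono) auto
  with Suc.IH assms[of n] show ?case
    by (simp add: algebra_simps)
qed simp

lemma power_dvd_sum_digits_iff:
  fixes r :: "nat \<Rightarrow> int"
  assumes "\<And>k. 0 \<le> r k \<and> r k < p"
  shows "(\<forall>n. p ^ n dvd (\<Sum>k<n. r k * p ^ k)) \<longleftrightarrow> (\<forall>k. r k = 0)"
proof
  assume dvd: "\<forall>n. p ^ n dvd (\<Sum>k<n. r k * p ^ k)"
  have sum_0: "(\<Sum>k<n. r k * p ^ k) = 0" for n
  proof (rule ccontr)
    assume "(\<Sum>k<n. r k * p ^ k) \<noteq> 0"
    with sum_digits_bounds[of r p n, OF assms] have "0 < (\<Sum>k<n. r k * p ^ k)"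
      by linarith
    with dvd have "p ^ n \<le> (\<Sum>k<n. r k * p ^ k)"
      by (simp add: zdvd_imp_le)
    with sum_digits_bounds[of r p n, OF assms] show False
      by linarith
  qed
  show "\<forall>k. r k = 0"
  proof
    fix k
    have "r k * p ^ k = 0"
      using sum_0[of "Suc k"] sum_0[of k] by simp
    moreover have "p > 0"
      using assms[of k] by simp
    ultimately show "r k = 0"
      by simp
  qed
qed simp

text \<open>The summand 3 x_0^2 x_{k-m-1} of the shifted cube at position k - 1, carried to position k.\<close>
definition cube_carry :: "nat \<Rightarrow> (nat \<Rightarrow> int) \<Rightarrow> nat \<Rightarrow> int" where
  "cube_carry m x k = (if m + 2 \<le> k then x 0 ^ 2 * x (k - m - 1) else 0)"

lemma cubic_fps_nth:
  "(fps_X ^ m * Abs_fps x ^ 3 + Abs_fps a * Abs_fps x) $ k =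
     Slhs m a x k + (3 * cube_carry m x (Suc k) - cube_carry m x k)"
proof -
  have conv: "\<And>k. (Abs_fps a * Abs_fps x) $ k = conv3 a x k"
    by (simp add: fps_mult_nth conv3_def atLeast0AtMost mult.commute)
  consider "k < m" | "k = m" | "k = m + 1" | "k \<ge> m + 2"
    by linarith
  then show ?thesis
  proof cases
    case 1
    then show ?thesis by (simp add: fps_X_power_mult_nth conv Slhs_def cube_carry_def)
  next
    case 2
    then show ?thesis by (simp add: fps_X_power_mult_nth conv Slhs_def cube_carry_def fps_nth_power_0)
  next
    case 3
    then show ?thesis
      using fps_cube_nth[of 1 "Abs_fps x"]
      by (simp add: fps_X_power_mult_nth conv Slhs_def cube_carry_def Npoly_def)
  next
    case 4
    then show ?thesis
      using fps_cube_nth[of "k - m" "Abs_fps x"]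
      by (simp add: fps_X_power_mult_nth conv Slhs_def cube_carry_def fps_nth_Abs_fps[abs_def])
  qed
qed

lemma cubic_sol3_iff_trunc3_Slhs:
  "cubic_sol3 m a b x \<longleftrightarrow> (\<forall>n. [trunc3 (Slhs m a x) n = trunc3 b n] (mod 3 ^ n))"
proof -
  have "[3 ^ m * trunc3 x n ^ 3 + trunc3 a n * trunc3 x n = trunc3 (Slhs m a x) n] (mod 3 ^ n)" for n
  proof -
    let ?X = "Abs_fps x" and ?A = "Abs_fps a"
    have nth: "fps_nth ?X = x" "fps_nth ?A = a"
      by (simp_all add: fun_eq_iff)
    have "[3 ^ m * trunc3 x n ^ 3 = 3 ^ m * trunc3 (fps_nth (?X ^ 3)) n] (mod 3 ^ n)"
      using trunc3_fps_power_cong[of ?X n 3] by (simp add: nth cong_scalar_left)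
    then have cube: "[3 ^ m * trunc3 x n ^ 3 = trunc3 (fps_nth (fps_X ^ m * ?X ^ 3)) n] (mod 3 ^ n)"
      using trunc3_fps_X_power_mult_cong cong_trans by blast
    have prod: "[trunc3 a n * trunc3 x n = trunc3 (fps_nth (?A * ?X)) n] (mod 3 ^ n)"
      using trunc3_fps_mult_cong[of ?A n ?X] by (simp add: nth)
    have "[3 ^ m * trunc3 x n ^ 3 + trunc3 a n * trunc3 x n =
        trunc3 (fps_nth (fps_X ^ m * ?X ^ 3)) n + trunc3 (fps_nth (?A * ?X)) n] (mod 3 ^ n)"
      using cube prod by (rule cong_add)
    also have "trunc3 (fps_nth (fps_X ^ m * ?X ^ 3)) n + trunc3 (fps_nth (?A * ?X)) n =
        trunc3 (Slhs m a x) n + trunc3 (\<lambda>k. 3 * cube_carry m x (Suc k) - cube_carry m x k) n"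
      by (simp flip: trunc3_add add: cubic_fps_nth[symmetric])
    also have "\<dots> = trunc3 (Slhs m a x) n + 3 ^ n * cube_carry m x n"
      by (simp only: trunc3_telescope) (simp add: cube_carry_def)
    also have "[\<dots> = trunc3 (Slhs m a x) n] (mod 3 ^ n)"
      by (simp add: cong_iff_dvd_diff)
    finally show ?thesis .
  qed
  then show ?thesis
    unfolding cubic_sol3_def by (meson cong_sym cong_trans)
qed

theorem theorem3p3:
  fixes m :: nat and a b x :: "nat \<Rightarrow> int"
  assumes "m > 0"
    and "digits3 a" and "a 0 \<noteq> 0"
    and "digits3 b" and "b 0 \<noteq> 0"
    and "digits3 x" and "x 0 \<noteq> 0"
  shows "cubic_sol3 m a b x \<longleftrightarrow>
    (\<forall>k. [Slhs m a x k + Mcarry m a b x k = b k] (mod 3))"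
proof -
  define r where "r k = (Slhs m a x k - b k + Mcarry m a b x k) mod 3" for k
  have "trunc3 (Slhs m a x) n - trunc3 b n = 3 ^ n * Mcarry m a b x n + (\<Sum>k<n. r k * 3 ^ k)" for n
    using sum_mult_power_eq_carry_digits[of "Mcarry m a b x" "\<lambda>k. Slhs m a x k - b k" 3 n]
    by (simp add: r_def trunc3_def sum_subtractf left_diff_distrib)
  then have "[trunc3 (Slhs m a x) n = trunc3 b n] (mod 3 ^ n) \<longleftrightarrow> 3 ^ n dvd (\<Sum>k<n. r k * 3 ^ k)" for n
    by (simp add: cong_iff_dvd_diff dvd_add_right_iff)
  moreover have "[Slhs m a x k + Mcarry m a b x k = b k] (mod 3) \<longleftrightarrow> r k = 0" for k
    by (simp add: r_def cong_iff_dvd_diff dvd_eq_mod_eq_0 algebra_simps)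
  moreover have "0 \<le> r k \<and> r k < 3" for k
    by (simp add: r_def)
  ultimately show ?thesis
    using power_dvd_sum_digits_iff[of r 3] by (simp add: cubic_sol3_iff_trunc3_Slhs)
qed

end
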